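(* Let $(c_i)_{i\ge0}$, $(b'_i)_{i\ge0}$, $(c'_i)_{i\ge0}$ be sequences of non-negative reals and let $L,R>0$ and $0<\epsilon<1$. Suppose that for all $i$: $b'_{i+1}\le b'_i+L(b'_ic_i+c'_i)$, $c'_{i+1}\le L(b'_ic_i+c'_i)c_i$, $c_{i+1}\le Rc_i^2$, and $c_i\le c'_i$; and that there is an index $I$ with $c_i\le\epsilon^{2^{(i-I)}}$ for all $i\ge I$. Then: (a) $(b'_i)$ is bounded; (b) there is $R'>0$ with $c'_{i+1}\le R'(c'_i)^2$ for all $i$; (c) there is an index $I'\ge I$ with $c'_i\le\epsilon^{2^{(i-I')}}$ for all $i\ge I'$. *)

theory Defs
  imports Complex_Main
begin

end

theory Submission
  imports Defs
begin

(* The decay hypothesis makes (c i) summable.  The potential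
   s i = b' i + 2 L c' i then satisfies s (i+1) <= s i (1 + a i) with a summable
   non-negative sequence a, so s is bounded by s 0 * exp (sum a); this bounds
   both b' and c' (part (a)).  With b' <= B and c <= c', the recursion for c'
   gives c' (i+1) <= (L (B+1) + 1) (c' i)^2 (part (b)).  Finally, since c i -> 0
   and b', c' are bounded, c' (j+1) eventually becomes as small as we like; once
   R' c' J <= eps, the quadratic recursion squares this bound at every step,
   which yields the doubly exponential decay of part (c). *)

text \<open>Doubly exponential decay dominates geometric decay, hence implies summability.\<close>
lemma summable_of_doubly_exp_decay:
  fixes c :: "nat \<Rightarrow> real" and \<epsilon> :: real
  assumes nn: "\<And>i. c i \<ge> 0" and eps: "0 \<le> \<epsilon>" "\<epsilon> < 1"
    and decay: "\<And>i. i \<ge> I \<Longrightarrow> c i \<le> \<epsilon> ^ (2 ^ (i - I))"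
  shows "summable c"
proof (rule summable_comparison_test_ev)
  show "eventually (\<lambda>i. norm (c i) \<le> \<epsilon> ^ (i - I)) sequentially"
    unfolding eventually_sequentially
  proof (intro exI allI impI)
    fix i assume "I \<le> i"
    have "\<epsilon> ^ (2 ^ (i - I)) \<le> \<epsilon> ^ (i - I)"
      using eps by (intro power_decreasing) auto
    with decay[OF \<open>I \<le> i\<close>] nn[of i] show "norm (c i) \<le> \<epsilon> ^ (i - I)" by simp
  qed
  have "summable (\<lambda>i. \<epsilon> ^ (i + I - I))" using eps by (simp add: summable_geometric)
  then show "summable (\<lambda>i. \<epsilon> ^ (i - I))" by (rule summable_iff_shift[THEN iffD1])
qed

lemma bounded_of_summable_growth:
  fixes s a :: "nat \<Rightarrow> real"
  assumes s_nn: "\<And>i. s i \<ge> 0" and a_nn: "\<And>i. a i \<ge> 0" and "summable a"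
    and step: "\<And>i. s (Suc i) \<le> s i * (1 + a i)"
  shows "s i \<le> s 0 * exp (suminf a)"
proof -
  have partial: "s i \<le> s 0 * exp (\<Sum>j<i. a j)" for i
  proof (induction i)
    case 0 then show ?case by simp
  next
    case (Suc i)
    have "s (Suc i) \<le> s i * (1 + a i)" by (rule step)
    also have "\<dots> \<le> s 0 * exp (\<Sum>j<i. a j) * exp (a i)"
      using Suc s_nn[of i] a_nn[of i] exp_ge_add_one_self[of "a i"] by (intro mult_mono) auto
    also have "\<dots> = s 0 * exp (\<Sum>j<Suc i. a j)" by (simp add: exp_add)
    finally show ?case .
  qed
  have "(\<Sum>j<i. a j) \<le> suminf a" using \<open>summable a\<close> a_nn by (intro sum_le_suminf) auto
  then have "s 0 * exp (\<Sum>j<i. a j) \<le> s 0 * exp (suminf a)"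
    using s_nn[of 0] by (intro mult_left_mono) auto
  with partial[of i] show ?thesis by linarith
qed

text \<open>If \<open>x (i+1) \<le> R x i ^ 2\<close> with \<open>R \<ge> 1\<close>, then \<open>R x i\<close> is squared at each step;
  so once \<open>R x J \<le> \<epsilon>\<close>, the sequence decays like \<open>\<epsilon> ^ 2 ^ (i - J)\<close>.\<close>
lemma doubly_exp_decay_of_quadratic:
  fixes x :: "nat \<Rightarrow> real" and R \<epsilon> :: real
  assumes nn: "\<And>i. x i \<ge> 0" and R: "R \<ge> 1"
    and step: "\<And>i. x (Suc i) \<le> R * (x i)\<^sup>2" and start: "R * x J \<le> \<epsilon>"
    and "i \<ge> J"
  shows "x i \<le> \<epsilon> ^ (2 ^ (i - J))"
proof -
  have scaled: "R * x (J + k) \<le> \<epsilon> ^ (2 ^ k)" for k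
  proof (induction k)
    case 0 then show ?case using start by simp
  next
    case (Suc k)
    have "R * x (J + Suc k) \<le> R * (R * (x (J + k))\<^sup>2)" using step[of "J + k"] R by simp
    also have "\<dots> = (R * x (J + k))\<^sup>2" by (simp add: power2_eq_square)
    also have "\<dots> \<le> (\<epsilon> ^ (2 ^ k))\<^sup>2" using Suc R nn[of "J + k"] by (intro power_mono) auto
    also have "\<dots> = \<epsilon> ^ (2 ^ Suc k)" by (simp add: power_mult[symmetric] mult.commute)
    finally show ?case .
  qed
  have "x i \<le> R * x i" using R nn[of i] by (simp add: mult_le_cancel_right1)
  with scaled[of "i - J"] \<open>i \<ge> J\<close> show ?thesis by simp
qed

lemma potential_step:
  fixes b c c' c'' b'' L :: real
  assumes "b \<ge> 0" "c \<ge> 0" "c' \<ge> 0" "L > 0"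
    and b'': "b'' \<le> b + L * (b * c + c')" and c'': "c'' \<le> L * (b * c + c') * c"
  shows "b'' + 2 * L * c'' \<le> (b + 2 * L * c') * (1 + (L * c + 2 * L\<^sup>2 * c\<^sup>2))"
proof -
  have "b'' + 2 * L * c'' \<le> b + L * (b * c + c') + 2 * L * (L * (b * c + c') * c)"
    using b'' c'' \<open>L > 0\<close> by (smt (verit) mult_left_mono)
  also have "\<dots> + (L * c' + 4 * L^3 * c' * c\<^sup>2) = (b + 2 * L * c') * (1 + (L * c + 2 * L\<^sup>2 * c\<^sup>2))"
    by (simp add: algebra_simps power2_eq_square power3_eq_cube)
  moreover have "0 \<le> L * c' + 4 * L^3 * c' * c\<^sup>2" using assms by simp
  ultimately show ?thesis by linarith
qed

lemma potential_bounded: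
  fixes c b' c' :: "nat \<Rightarrow> real" and L :: real
  assumes c_nn: "\<And>i. c i \<ge> 0" and b'_nn: "\<And>i. b' i \<ge> 0" and c'_nn: "\<And>i. c' i \<ge> 0"
    and L_pos: "L > 0" and "summable c"
    and rec_b: "\<And>i. b' (Suc i) \<le> b' i + L * (b' i * c i + c' i)"
    and rec_c': "\<And>i. c' (Suc i) \<le> L * (b' i * c i + c' i) * c i"
  shows "\<exists>S. \<forall>i. b' i + 2 * L * c' i \<le> S"
proof -
  define a where "a i = L * c i + 2 * L\<^sup>2 * (c i)\<^sup>2" for i
  have c_small: "eventually (\<lambda>i. c i \<le> 1) sequentially"
    using order_tendstoD(2)[OF summable_LIMSEQ_zero[OF \<open>summable c\<close>] zero_less_one]
    by (auto elim: eventually_mono)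
  have "summable (\<lambda>i. (c i)\<^sup>2)"
  proof (rule summable_comparison_test_ev[OF _ \<open>summable c\<close>])
    show "eventually (\<lambda>i. norm ((c i)\<^sup>2) \<le> c i) sequentially"
      using c_small by eventually_elim (use c_nn in \<open>auto simp: power2_eq_square mult_left_le\<close>)
  qed
  then have "summable a" unfolding a_def using \<open>summable c\<close>
    by (intro summable_add summable_mult) auto
  moreover have "a i \<ge> 0" for i unfolding a_def using c_nn[of i] L_pos by simp
  moreover have "b' (Suc i) + 2 * L * c' (Suc i) \<le> (b' i + 2 * L * c' i) * (1 + a i)" for i
    unfolding a_def using potential_step[OF b'_nn c_nn c'_nn L_pos rec_b rec_c'] .
  moreover have "b' i + 2 * L * c' i \<ge> 0" for i using b'_nn[of i] c'_nn[of i] L_pos by simp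
  ultimately show ?thesis
    using bounded_of_summable_growth[of "\<lambda>i. b' i + 2 * L * c' i" a] by blast
qed

lemma quadratic_step_c':
  fixes b c c' c'' L B :: real
  assumes "b \<ge> 0" "c \<ge> 0" "L > 0" "b \<le> B" "c \<le> c'"
    and c'': "c'' \<le> L * (b * c + c') * c"
  shows "c'' \<le> (L * (B + 1) + 1) * c'\<^sup>2"
proof -
  have "b * c + c' \<le> (B + 1) * c'"
    using assms mult_mono[of b B c c'] by (simp add: algebra_simps)
  then have "L * (b * c + c') * c \<le> L * ((B + 1) * c') * c'"
    using assms by (intro mult_mono) auto
  also have "\<dots> \<le> (L * (B + 1) + 1) * c'\<^sup>2"
    by (simp add: power2_eq_square algebra_simps)
  finally show ?thesis using c'' by linarith
qed

lemma c'_tendsto_zero: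
  fixes c b' c' :: "nat \<Rightarrow> real" and L B C :: real
  assumes c_nn: "\<And>i. c i \<ge> 0" and b'_nn: "\<And>i. b' i \<ge> 0" and c'_nn: "\<And>i. c' i \<ge> 0"
    and L_pos: "L > 0" and b'_le: "\<And>i. b' i \<le> B" and c'_le: "\<And>i. c' i \<le> C"
    and c_lim: "c \<longlonglongrightarrow> 0"
    and rec_c': "\<And>i. c' (Suc i) \<le> L * (b' i * c i + c' i) * c i"
  shows "(\<lambda>i. c' (Suc i)) \<longlonglongrightarrow> 0"
proof (rule tendsto_sandwich)
  show "eventually (\<lambda>i. 0 \<le> c' (Suc i)) sequentially" using c'_nn by simp
  have "eventually (\<lambda>i. c i \<le> 1) sequentially" using order_tendstoD(2)[OF c_lim zero_less_one] by (auto elim: eventually_mono)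
  then show "eventually (\<lambda>i. c' (Suc i) \<le> L * (B + C) * c i) sequentially"
  proof eventually_elim
    case (elim i)
    have "b' i * c i \<le> B"
      using b'_le[of i] b'_nn[of i] c_nn[of i] elim mult_left_le[of "c i" "b' i"] by linarith
    then have "b' i * c i + c' i \<le> B + C" using c'_le[of i] by linarith
    then have "L * (b' i * c i + c' i) * c i \<le> L * (B + C) * c i"
      using L_pos c_nn[of i] by (intro mult_right_mono mult_left_mono) auto
    with rec_c'[of i] show ?case by linarith
  qed
  show "(\<lambda>i. L * (B + C) * c i) \<longlonglongrightarrow> 0"
    using tendsto_mult_right_zero[OF c_lim] .
qed (rule tendsto_const)

theorem lemma5p3:
  fixes c b' c' :: "nat \<Rightarrow> real" and L R \<epsilon> :: real and I :: nat
  assumes c_nn: "\<And>i. c i \<ge> 0"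
    and b'_nn: "\<And>i. b' i \<ge> 0"
    and c'_nn: "\<And>i. c' i \<ge> 0"
    and L_pos: "L > 0" and R_pos: "R > 0"
    and eps_pos: "0 < \<epsilon>" and eps_lt1: "\<epsilon> < 1"
    and rec_b: "\<And>i. b' (Suc i) \<le> b' i + L * (b' i * c i + c' i)"
    and rec_c': "\<And>i. c' (Suc i) \<le> L * (b' i * c i + c' i) * c i"
    and rec_c: "\<And>i. c (Suc i) \<le> R * (c i)\<^sup>2"
    and c_le: "\<And>i. c i \<le> c' i"
    and decay: "\<And>i. i \<ge> I \<Longrightarrow> c i \<le> \<epsilon> ^ (2 ^ (i - I))"
  shows "(\<exists>B. \<forall>i. \<bar>b' i\<bar> \<le> B) \<and>
         (\<exists>R'>0. \<forall>i. c' (Suc i) \<le> R' * (c' i)\<^sup>2) \<and>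
         (\<exists>I'\<ge>I. \<forall>i\<ge>I'. c' i \<le> \<epsilon> ^ (2 ^ (i - I')))"
proof -
  have "summable c"
    using summable_of_doubly_exp_decay[OF c_nn _ eps_lt1 decay] eps_pos by simp
  then obtain S where S: "\<And>i. b' i + 2 * L * c' i \<le> S"
    using potential_bounded[OF c_nn b'_nn c'_nn L_pos \<open>summable c\<close> rec_b rec_c'] by blast
  have b'_le: "b' i \<le> S" for i using S[of i] c'_nn[of i] L_pos by (smt (verit) mult_nonneg_nonneg)
  have c'_le: "c' i \<le> S / (2 * L)" for i
    using S[of i] b'_nn[of i] L_pos by (simp add: field_simps)
  have "S \<ge> 0" using b'_le[of 0] b'_nn[of 0] by linarith
  define R' where "R' = L * (S + 1) + 1"
  have R'_ge: "R' \<ge> 1" unfolding R'_def using L_pos \<open>S \<ge> 0\<close> by simp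
  have quad: "c' (Suc i) \<le> R' * (c' i)\<^sup>2" for i
    unfolding R'_def using quadratic_step_c'[OF b'_nn c_nn L_pos b'_le c_le rec_c'] .
  have "(\<lambda>i. c' (Suc i)) \<longlonglongrightarrow> 0"
    using c'_tendsto_zero[OF c_nn b'_nn c'_nn L_pos b'_le c'_le
        summable_LIMSEQ_zero[OF \<open>summable c\<close>] rec_c'] .
  then have "(\<lambda>i. R' * c' (Suc i)) \<longlonglongrightarrow> 0" by (rule tendsto_mult_right_zero)
  then have "eventually (\<lambda>j. R' * c' (Suc j) < \<epsilon> \<and> j \<ge> I) sequentially"
    using eps_pos by (intro eventually_conj order_tendstoD(2) eventually_ge_at_top) auto
  then obtain j where j: "R' * c' (Suc j) \<le> \<epsilon>" "j \<ge> I"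
    unfolding eventually_sequentially by (meson less_imp_le order_refl)
  have "\<forall>i\<ge>Suc j. c' i \<le> \<epsilon> ^ (2 ^ (i - Suc j))"
    using doubly_exp_decay_of_quadratic[of c' R', OF c'_nn R'_ge quad j(1)] by simp
  moreover have "\<bar>b' i\<bar> \<le> S" for i using b'_le[of i] b'_nn[of i] by simp
  moreover have "Suc j \<ge> I" using j(2) by simp
  moreover have "R' > 0" using R'_ge by simp
  ultimately show ?thesis using quad by blast
qed

end
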